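(* For every $\eta\in(0,1]$ and $b\in\mathbb{N}$ there exists $a_0$ such that for every integer $a\ge a_0$ there exists $\nu_0>0$ such that for every $\nu\in(0,\nu_0]$ there exists $\mu_0>0$ such that for every $\mu\in(0,\mu_0]$ there exists $n_0$ such that for all $n\ge n_0$ the following holds. Let $m\in\mathbb{N}$ and let $C_1,\dots,C_m$ be finite multisets of elements of $\mathbb{N}$ such that (S1) $\nu n\le |C_i|\le n$ for every $i\in[m]$; (S2) $\sum_{i=1}^m \mathrm{mult}(t,C_i)\le \mu n$ for every $t\in\mathbb{N}$. Let $\ell\in\mathbb{N}$ and let $U_1,\dots,U_\ell\subseteq\mathbb{N}$ be pairwise disjoint sets with $|U_k|=a$ for all $k$, and $U=\bigcup_{k=1}^\ell U_k$. Then there exists $T\subseteq U$ such that (T1) $|T\cap U_k|\ge b$ for every $k\in[\ell]$; (T2) $|C_i\setminus^+ T|\ge (1-\eta)|C_i|$ for every $i\in[m]$.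
   Context: For a multiset $C$ and $t\in\mathbb{N}$, $\mathrm{mult}(t,C)$ is the multiplicity of $t$ in $C$; $|C|$ is the size counted with multiplicity. For a set $T$, $C\setminus^+T$ is the multiset obtained from $C$ by removing all copies of all elements of $T$. *)

theory Defs
  imports Complex_Main "HOL-Library.Multiset"
begin

definition mset_remove_set :: "'a multiset \<Rightarrow> 'a set \<Rightarrow> 'a multiset" where
  "mset_remove_set C T = filter_mset (\<lambda>x. x \<notin> T) C"

end

theory Submission
  imports Defs "HOL-Library.Disjoint_Sets"
begin

text \<open>Giving weight \<open>b / a\<close> to every point of \<open>U\<close> is a fractional transversal that meets each
  block in exactly \<open>b\<close> and removes at most a \<open>b / a\<close> fraction of each \<open>C\<^sub>i\<close>. It is made integral by
  iterated rounding in the style of Beck and Fiala, with \<open>\<delta> = \<mu> / \<nu>\<close> bounding the total relative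
  multiplicity of a point over all \<open>C\<^sub>i\<close>. While fractional coordinates remain, each block that
  contains one contains at least two, and fewer than a quarter as many rows carry relative weight
  above \<open>4 \<delta>\<close> on them; so the block equations and the constraints of these heavy rows are fewer
  than the fractional coordinates, and moving along a kernel direction makes one more coordinate
  integral. A row is dropped only when its fractional part weighs at most \<open>4 \<delta>\<close>, so in the end
  each \<open>C\<^sub>i\<close> loses at most \<open>(b / a + 4 \<delta>) |C\<^sub>i|\<close>, which is at most \<open>\<eta> |C\<^sub>i|\<close>.\<close>

lemma size_filter_mset_mem:
  assumes "finite T"
  shows "size (filter_mset (\<lambda>x. x \<in> T) M) = (\<Sum>t\<in>T. count M t)"
proof -
  have "size (filter_mset (\<lambda>x. x \<in> T) M) = (\<Sum>t\<in>set_mset M \<inter> T. count M t)"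
    by (simp add: size_multiset_overloaded_eq, rule sum.cong, auto)
  also have "\<dots> = (\<Sum>t\<in>T. count M t)"
    by (rule sum.mono_neutral_left) (auto simp: assms count_eq_zero_iff)
  finally show ?thesis .
qed

lemma size_mset_remove_set:
  assumes "finite T"
  shows "size (mset_remove_set M T) + (\<Sum>t\<in>T. count M t) = size M"
  by (metis add.commute assms mset_remove_set_def multiset_partition size_filter_mset_mem size_union)

lemma exists_nontrivial_solution:
  fixes g :: "'j \<Rightarrow> 'a \<Rightarrow> 'b::field"
  assumes "finite J" "finite F" "card J < card F"
  shows "\<exists>y. (\<forall>t. t \<notin> F \<longrightarrow> y t = 0) \<and> (\<exists>t\<in>F. y t \<noteq> 0) \<and>
             (\<forall>j\<in>J. (\<Sum>t\<in>F. g j t * y t) = 0)"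
  using assms
proof (induction J arbitrary: F g rule: finite_induct)
  case empty
  then obtain t0 where "t0 \<in> F" by fastforce
  then show ?case by (intro exI[of _ "\<lambda>t. if t = t0 then 1 else 0"]) auto
next
  case (insert j J)
  show ?case
  proof (cases "\<forall>t\<in>F. g j t = 0")
    case True
    from insert.IH[of F g] insert.prems insert.hyps obtain y where
      "\<forall>t. t \<notin> F \<longrightarrow> y t = 0" "\<exists>t\<in>F. y t \<noteq> 0" "\<forall>j\<in>J. (\<Sum>t\<in>F. g j t * y t) = 0"
      by auto
    with True show ?thesis by (intro exI[of _ y]) auto
  next
    case False
    then obtain s where s: "s \<in> F" "g j s \<noteq> 0" by auto
    \<comment> \<open>Eliminate the unknown at \<open>s\<close> using the equation \<open>j\<close>, as in Gaussian elimination.\<close>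
    define F' where "F' = F - {s}"
    define g' where "g' j' t = g j' t - g j' s * g j t / g j s" for j' t
    have "card J < card F'" using s insert by (simp add: F'_def)
    with insert.IH[of F' g'] insert.prems obtain y' where
      y': "\<forall>t. t \<notin> F' \<longrightarrow> y' t = 0" "\<exists>t\<in>F'. y' t \<noteq> 0" "\<forall>j'\<in>J. (\<Sum>t\<in>F'. g' j' t * y' t) = 0"
      by (auto simp: F'_def)
    define y where "y t = (if t = s then - (\<Sum>t\<in>F'. g j t * y' t) / g j s else y' t)" for t
    have split: "(\<Sum>t\<in>F. h t * y t) = h s * y s + (\<Sum>t\<in>F'. h t * y' t)" for h
    proof -
      have "(\<Sum>t\<in>F. h t * y t) = h s * y s + (\<Sum>t\<in>F'. h t * y t)"
        using s insert.prems by (simp add: F'_def sum.remove)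
      also have "(\<Sum>t\<in>F'. h t * y t) = (\<Sum>t\<in>F'. h t * y' t)"
        by (rule sum.cong) (auto simp: y_def F'_def)
      finally show ?thesis .
    qed
    have "(\<Sum>t\<in>F. g j' t * y t) = 0" if "j' \<in> J" for j'
    proof -
      have "0 = (\<Sum>t\<in>F'. g' j' t * y' t)" using y'(3) that by auto
      also have "\<dots> = (\<Sum>t\<in>F'. g j' t * y' t) - g j' s / g j s * (\<Sum>t\<in>F'. g j t * y' t)"
        by (simp add: g'_def algebra_simps sum_subtractf sum_distrib_left)
      finally show ?thesis unfolding split using s(2) by (simp add: y_def)
    qed
    moreover have "(\<Sum>t\<in>F. g j t * y t) = 0" unfolding split using s(2) by (simp add: y_def)
    moreover have "\<forall>t. t \<notin> F \<longrightarrow> y t = 0" "\<exists>t\<in>F. y t \<noteq> 0"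
      using y' s by (auto simp: y_def F'_def)
    ultimately show ?thesis by (intro exI[of _ y]) auto
  qed
qed

lemma exists_step_to_boundary:
  fixes x y :: "'a \<Rightarrow> real"
  assumes "finite F" and x_open: "\<And>t. t \<in> F \<Longrightarrow> 0 < x t \<and> x t < 1" and "\<exists>t\<in>F. y t \<noteq> 0"
  shows "\<exists>c>0. (\<forall>t\<in>F. 0 \<le> x t + c * y t \<and> x t + c * y t \<le> 1) \<and>
               (\<exists>s\<in>F. x s + c * y s \<in> {0, 1})"
proof -
  define Y where "Y = {t\<in>F. y t \<noteq> 0}"
  define r where "r t = (if 0 < y t then (1 - x t) / y t else x t / (- y t))" for t
  define c where "c = Min (r ` Y)"
  have "finite Y" "Y \<noteq> {}" using assms unfolding Y_def by auto
  have r_pos: "0 < r t" if "t \<in> Y" for t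
  proof -
    have "0 < x t" "x t < 1" "y t \<noteq> 0" using that x_open unfolding Y_def by auto
    show ?thesis
    proof (cases "0 < y t")
      case True
      then show ?thesis using \<open>x t < 1\<close> by (simp add: r_def)
    next
      case False
      then have "0 < - y t" using \<open>y t \<noteq> 0\<close> by simp
      then show ?thesis using False \<open>0 < x t\<close> unfolding r_def by (metis divide_pos_pos)
    qed
  qed
  have "c \<in> r ` Y" using Min_in \<open>finite Y\<close> \<open>Y \<noteq> {}\<close> unfolding c_def by simp
  then obtain s where s: "s \<in> Y" "r s = c" by auto
  have "0 < c" using r_pos s by metis
  have c_le: "c \<le> r t" if "t \<in> Y" for t using \<open>finite Y\<close> that unfolding c_def by simp
  have "0 \<le> x t + c * y t \<and> x t + c * y t \<le> 1" if "t \<in> F" for t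
  proof (cases "y t = 0")
    case True
    then show ?thesis using x_open[OF that] by simp
  next
    case False
    then have "c \<le> r t" using that c_le unfolding Y_def by blast
    show ?thesis
    proof (cases "0 < y t")
      case True
      then have "c * y t \<le> 1 - x t" using \<open>c \<le> r t\<close> by (simp add: r_def pos_le_divide_eq)
      moreover have "0 \<le> c * y t" using True \<open>0 < c\<close> by simp
      ultimately show ?thesis using x_open[OF that] by simp
    next
      case False
      then have "0 < - y t" using \<open>y t \<noteq> 0\<close> by simp
      moreover have "c \<le> x t / (- y t)" using \<open>c \<le> r t\<close> False by (simp add: r_def)
      ultimately have "c * (- y t) \<le> x t" using pos_le_divide_eq by blast
      moreover have "c * y t \<le> 0" using False \<open>0 < c\<close> by (simp add: mult_nonneg_nonpos)
      ultimately show ?thesis using x_open[OF that] by simp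
    qed
  qed
  moreover have "x s + c * y s \<in> {0, 1}"
  proof -
    have "y s \<noteq> 0" using s unfolding Y_def by simp
    then show ?thesis using s(2)[symmetric] unfolding r_def by (cases "0 < y s") simp_all
  qed
  moreover have "s \<in> F" using s unfolding Y_def by simp
  ultimately show ?thesis using \<open>0 < c\<close> by blast
qed

locale weighted_blocks =
  fixes K :: "'k set" and U :: "'k \<Rightarrow> 'a set" and I :: "'i set"
    and w :: "'i \<Rightarrow> 'a \<Rightarrow> real" and \<delta> :: real
  assumes finite_K: "finite K" and finite_blocks: "\<And>k. k \<in> K \<Longrightarrow> finite (U k)"
    and disjoint_blocks: "disjoint_family_on U K"
    and finite_I: "finite I" and weight_nonneg: "\<And>i t. 0 \<le> w i t"
    and column_sum_le: "\<And>t. (\<Sum>i\<in>I. w i t) \<le> \<delta>" and delta_pos: "0 < \<delta>"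
begin

definition ground :: "'a set" where
  "ground = (\<Union>k\<in>K. U k)"

text \<open>A row \<open>i\<close> either still satisfies its linear constraint, or it has
  been dropped and its weight on the whole support is already at most \<open>B + 4 \<delta>\<close>; since rounding
  only shrinks the support, a dropped row stays within that bound.\<close>
definition feasible :: "nat \<Rightarrow> real \<Rightarrow> ('a \<Rightarrow> real) \<Rightarrow> bool" where
  "feasible b B x \<longleftrightarrow>
     (\<forall>t. t \<notin> ground \<longrightarrow> x t = 0) \<and> (\<forall>t. 0 \<le> x t \<and> x t \<le> 1) \<and>
     (\<forall>k\<in>K. (\<Sum>t\<in>U k. x t) = real b) \<and>
     (\<forall>i\<in>I. (\<Sum>t\<in>ground. w i t * x t) \<le> B \<or> (\<Sum>t\<in>{t\<in>ground. x t \<noteq> 0}. w i t) \<le> B + 4 * \<delta>)"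

definition fractional :: "('a \<Rightarrow> real) \<Rightarrow> 'a set" where
  "fractional x = {t\<in>ground. 0 < x t \<and> x t < 1}"

lemma finite_ground: "finite ground"
  using finite_K finite_blocks by (simp add: ground_def)

lemma block_subset_ground: "k \<in> K \<Longrightarrow> U k \<subseteq> ground"
  by (auto simp: ground_def)

lemma finite_fractional: "finite (fractional x)"
  using finite_ground by (simp add: fractional_def)

lemma feasible_integral_off_fractional:
  assumes "feasible b B x" "t \<in> ground" "t \<notin> fractional x"
  shows "x t = 0 \<or> x t = 1"
proof -
  have "0 \<le> x t" "x t \<le> 1" using assms(1) by (simp_all add: feasible_def)
  moreover have "\<not> (0 < x t \<and> x t < 1)" using assms(2,3) by (simp add: fractional_def)
  ultimately show ?thesis by linarith
qed

lemma block_meets_fractional_twice: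
  assumes x: "feasible b B x" and k: "k \<in> K" and meets: "U k \<inter> fractional x \<noteq> {}"
  shows "2 \<le> card (U k \<inter> fractional x)"
proof (rule ccontr)
  assume "\<not> 2 \<le> card (U k \<inter> fractional x)"
  moreover have "finite (U k \<inter> fractional x)" using finite_fractional by simp
  ultimately have "card (U k \<inter> fractional x) = 1" using meets card_gt_0_iff[of "U k \<inter> fractional x"] by linarith
  then obtain s where s: "U k \<inter> fractional x = {s}" by (rule card_1_singletonE)
  have "(\<Sum>t\<in>U k - {s}. x t) = (\<Sum>t\<in>U k - {s}. of_bool (x t = 1))"
  proof (rule sum.cong)
    fix t assume "t \<in> U k - {s}"
    then have "t \<in> ground" "t \<notin> fractional x" using s block_subset_ground[OF k] by auto
    then show "x t = of_bool (x t = 1)" using feasible_integral_off_fractional[OF x] by fastforce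
  qed simp
  also have "\<dots> = real (card ((U k - {s}) \<inter> {t. x t = 1}))"
    using finite_blocks[OF k] by simp
  finally have "(\<Sum>t\<in>U k - {s}. x t) = real (card ((U k - {s}) \<inter> {t. x t = 1}))" .
  moreover have "real b = x s + (\<Sum>t\<in>U k - {s}. x t)"
  proof -
    have "s \<in> U k" using s by blast
    then have "(\<Sum>t\<in>U k. x t) = x s + (\<Sum>t\<in>U k - {s}. x t)"
      using finite_blocks[OF k] by (simp add: sum.remove)
    then show ?thesis using x k by (simp add: feasible_def)
  qed
  moreover have "0 < x s" "x s < 1" using s by (auto simp: fractional_def)
  ultimately have "card ((U k - {s}) \<inter> {t. x t = 1}) < b" "b < card ((U k - {s}) \<inter> {t. x t = 1}) + 1"
    by linarith+
  then show False by linarith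
qed

lemma card_blocks_meeting_fractional:
  assumes x: "feasible b B x"
  shows "2 * card {k\<in>K. U k \<inter> fractional x \<noteq> {}} \<le> card (fractional x)"
proof -
  let ?Kx = "{k\<in>K. U k \<inter> fractional x \<noteq> {}}"
  have "finite ?Kx" using finite_K by simp
  have "2 * card ?Kx = (\<Sum>k\<in>?Kx. 2)" by simp
  also have "\<dots> \<le> (\<Sum>k\<in>?Kx. card (U k \<inter> fractional x))"
    using block_meets_fractional_twice[OF x] by (intro sum_mono) auto
  also have "\<dots> = card (\<Union>k\<in>?Kx. U k \<inter> fractional x)"
    using \<open>finite ?Kx\<close> finite_fractional disjoint_blocks
    by (subst card_UN_disjoint) (auto simp: disjoint_family_on_def)
  also have "\<dots> \<le> card (fractional x)"
    using finite_fractional by (intro card_mono) auto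
  finally show ?thesis .
qed

lemma card_heavy_rows:
  assumes "finite F"
  shows "4 * card {i\<in>I. 4 * \<delta> < (\<Sum>t\<in>F. w i t)} \<le> card F"
proof -
  let ?H = "{i\<in>I. 4 * \<delta> < (\<Sum>t\<in>F. w i t)}"
  have "real (card ?H) * (4 * \<delta>) = (\<Sum>i\<in>?H. 4 * \<delta>)" by simp
  also have "\<dots> \<le> (\<Sum>i\<in>?H. \<Sum>t\<in>F. w i t)" by (intro sum_mono) simp
  also have "\<dots> \<le> (\<Sum>i\<in>I. \<Sum>t\<in>F. w i t)"
    using finite_I weight_nonneg by (intro sum_mono2) (auto intro: sum_nonneg)
  also have "\<dots> = (\<Sum>t\<in>F. \<Sum>i\<in>I. w i t)" by (rule sum.swap)
  also have "\<dots> \<le> real (card F) * \<delta>"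
    using column_sum_le sum_mono[of F "\<lambda>t. \<Sum>i\<in>I. w i t" "\<lambda>_. \<delta>"] by simp
  finally have "real (4 * card ?H) * \<delta> \<le> real (card F) * \<delta>" by (simp add: algebra_simps)
  then show ?thesis using delta_pos by simp
qed

lemma support_weight_le:
  assumes x: "feasible b B x"
  shows "(\<Sum>t\<in>{t\<in>ground. x t \<noteq> 0}. w i t)
           \<le> (\<Sum>t\<in>ground. w i t * x t) + (\<Sum>t\<in>fractional x. w i t)"
proof -
  let ?S = "{t\<in>ground. x t \<noteq> 0}"
  have "fractional x \<subseteq> ?S" by (auto simp: fractional_def)
  then have "(\<Sum>t\<in>?S. w i t) = (\<Sum>t\<in>?S - fractional x. w i t) + (\<Sum>t\<in>fractional x. w i t)"
    using finite_ground by (simp add: sum.subset_diff)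
  also have "(\<Sum>t\<in>?S - fractional x. w i t) = (\<Sum>t\<in>?S - fractional x. w i t * x t)"
  proof (rule sum.cong)
    fix t assume "t \<in> ?S - fractional x"
    then have "x t = 1" using feasible_integral_off_fractional[OF x] by auto
    then show "w i t = w i t * x t" by simp
  qed simp
  also have "\<dots> \<le> (\<Sum>t\<in>ground. w i t * x t)"
    using finite_ground weight_nonneg x by (intro sum_mono2) (auto simp: feasible_def)
  finally show ?thesis by simp
qed

lemma feasible_move:
  assumes x: "feasible b B x"
    and y_supp: "\<And>t. t \<notin> fractional x \<Longrightarrow> y t = 0"
    and y_blocks: "\<And>k. k \<in> K \<Longrightarrow> (\<Sum>t\<in>U k. y t) = 0"
    and y_heavy: "\<And>i. i \<in> I \<Longrightarrow> 4 * \<delta> < (\<Sum>t\<in>fractional x. w i t) \<Longrightarrow>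
                      (\<Sum>t\<in>ground. w i t * y t) = 0"
    and bounds: "\<And>t. 0 \<le> x t + y t \<and> x t + y t \<le> 1"
  shows "feasible b B (\<lambda>t. x t + y t)"
  unfolding feasible_def
proof (intro conjI allI ballI impI)
  fix t assume "t \<notin> ground"
  then show "x t + y t = 0" using x y_supp by (auto simp: feasible_def fractional_def)
next
  fix t show "0 \<le> x t + y t" "x t + y t \<le> 1" using bounds by auto
next
  fix k assume "k \<in> K"
  then show "(\<Sum>t\<in>U k. x t + y t) = real b" using x y_blocks by (simp add: feasible_def sum.distrib)
next
  fix i assume i: "i \<in> I"
  let ?S = "{t\<in>ground. x t \<noteq> 0}" and ?S' = "{t\<in>ground. x t + y t \<noteq> 0}"
  have "(\<Sum>t\<in>ground. w i t * (x t + y t)) = (\<Sum>t\<in>ground. w i t * x t) + (\<Sum>t\<in>ground. w i t * y t)"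
    by (simp add: distrib_left sum.distrib)
  moreover have "(\<Sum>t\<in>?S. w i t) \<le> B + 4 * \<delta>"
    if "\<not> (4 * \<delta> < (\<Sum>t\<in>fractional x. w i t) \<and> (\<Sum>t\<in>ground. w i t * x t) \<le> B)"
    using that support_weight_le[OF x, of i] x i by (force simp: feasible_def)
  moreover have "(\<Sum>t\<in>?S'. w i t) \<le> (\<Sum>t\<in>?S. w i t)"
  proof -
    have "?S' \<subseteq> ?S" using y_supp by (auto simp: fractional_def)
    then show ?thesis using finite_ground weight_nonneg by (intro sum_mono2) auto
  qed
  ultimately show "(\<Sum>t\<in>ground. w i t * (x t + y t)) \<le> B \<or> (\<Sum>t\<in>?S'. w i t) \<le> B + 4 * \<delta>"
    using y_heavy[OF i] by force
qed

lemma exists_feasible_less_fractional: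
  assumes x: "feasible b B x" and "fractional x \<noteq> {}"
  shows "\<exists>x'. feasible b B x' \<and> fractional x' \<subset> fractional x"
proof -
  define F where "F = fractional x"
  define Kx where "Kx = {k\<in>K. U k \<inter> F \<noteq> {}}"
  define H where "H = {i\<in>I. 4 * \<delta> < (\<Sum>t\<in>F. w i t)}"
  define J where "J = Inl ` Kx \<union> Inr ` H"
  define g where "g j t = (case j of Inl k \<Rightarrow> of_bool (t \<in> U k) | Inr i \<Rightarrow> w i t)"
    for j :: "'k + 'i" and t
  have "finite F" by (simp add: F_def finite_fractional)
  have "finite J" using finite_K finite_I by (simp add: J_def Kx_def H_def)
  \<comment> \<open>The system \<open>J\<close> has at most \<open>|F| / 2 + |F| / 4\<close> equations in the \<open>|F|\<close> unknowns.\<close>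
  have "card J < card F"
  proof -
    have "card J = card Kx + card H"
      using finite_K finite_I unfolding J_def Kx_def H_def
      by (subst card_Un_disjoint) (auto simp: card_image)
    moreover have "2 * card Kx \<le> card F"
      using card_blocks_meeting_fractional[OF x] by (simp add: Kx_def F_def)
    moreover have "4 * card H \<le> card F" using card_heavy_rows[OF \<open>finite F\<close>] by (simp add: H_def)
    moreover have "0 < card F" using assms \<open>finite F\<close> by (simp add: F_def card_gt_0_iff)
    ultimately show ?thesis by linarith
  qed
  then obtain y where y_supp: "\<forall>t. t \<notin> F \<longrightarrow> y t = 0" and "\<exists>t\<in>F. y t \<noteq> 0"
    and y_eqs: "\<forall>j\<in>J. (\<Sum>t\<in>F. g j t * y t) = 0"
    using exists_nontrivial_solution[OF \<open>finite J\<close> \<open>finite F\<close>] by blast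
  moreover have "\<And>t. t \<in> F \<Longrightarrow> 0 < x t \<and> x t < 1" by (simp add: F_def fractional_def)
  ultimately obtain c where c: "0 < c" "\<forall>t\<in>F. 0 \<le> x t + c * y t \<and> x t + c * y t \<le> 1"
    and s: "\<exists>s\<in>F. x s + c * y s \<in> {0, 1}"
    using exists_step_to_boundary[OF \<open>finite F\<close>] by blast
  have "feasible b B (\<lambda>t. x t + c * y t)"
  proof (rule feasible_move[OF x])
    fix t assume "t \<notin> fractional x"
    then show "c * y t = 0" using y_supp by (simp add: F_def)
  next
    fix k assume "k \<in> K"
    have "(\<Sum>t\<in>U k. y t) = (\<Sum>t\<in>U k \<inter> F. y t)"
      using finite_blocks[OF \<open>k \<in> K\<close>] y_supp by (intro sum.mono_neutral_right) auto
    also have "\<dots> = (\<Sum>t\<in>F. g (Inl k) t * y t)"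
      using \<open>finite F\<close> by (simp add: g_def sum.inter_restrict Int_commute if_distrib cong: if_cong)
    also have "\<dots> = 0"
    proof (cases "k \<in> Kx")
      case True
      then show ?thesis using y_eqs by (simp add: J_def)
    next
      case False
      then show ?thesis using \<open>k \<in> K\<close> by (auto simp: Kx_def g_def intro!: sum.neutral)
    qed
    finally show "(\<Sum>t\<in>U k. c * y t) = 0" by (simp add: sum_distrib_left[symmetric])
  next
    fix i assume "i \<in> I" "4 * \<delta> < (\<Sum>t\<in>fractional x. w i t)"
    then have "i \<in> H" by (simp add: H_def F_def)
    have "(\<Sum>t\<in>ground. w i t * y t) = (\<Sum>t\<in>F. w i t * y t)"
      using finite_ground y_supp by (intro sum.mono_neutral_right) (auto simp: F_def fractional_def)
    also have "\<dots> = (\<Sum>t\<in>F. g (Inr i) t * y t)" by (simp add: g_def)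
    also have "\<dots> = 0" using y_eqs \<open>i \<in> H\<close> by (simp add: J_def)
    finally show "(\<Sum>t\<in>ground. w i t * (c * y t)) = 0"
      by (simp add: mult.left_commute sum_distrib_left[symmetric])
  next
    fix t show "0 \<le> x t + c * y t \<and> x t + c * y t \<le> 1"
      using c x y_supp by (cases "t \<in> F") (auto simp: feasible_def)
  qed
  moreover have "fractional (\<lambda>t. x t + c * y t) \<subset> F"
  proof
    show "fractional (\<lambda>t. x t + c * y t) \<subseteq> F"
      using y_supp by (auto simp: F_def fractional_def)
    show "fractional (\<lambda>t. x t + c * y t) \<noteq> F" using s by (auto simp: fractional_def)
  qed
  ultimately show ?thesis unfolding F_def by blast
qed

lemma exists_integral_feasible:
  assumes "feasible b B x"
  shows "\<exists>x'. feasible b B x' \<and> fractional x' = {}"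
  using assms
proof (induction "card (fractional x)" arbitrary: x rule: less_induct)
  case less
  show ?case
  proof (cases "fractional x = {}")
    case False
    then obtain x' where "feasible b B x'" "fractional x' \<subset> fractional x"
      using exists_feasible_less_fractional[OF less.prems] by blast
    moreover from this(2) have "card (fractional x') < card (fractional x)"
      by (simp add: finite_fractional psubset_card_mono)
    ultimately show ?thesis using less.hyps by blast
  qed (use less.prems in blast)
qed

theorem exists_rounding:
  assumes "feasible b B x"
  shows "\<exists>T \<subseteq> ground. (\<forall>k\<in>K. card (T \<inter> U k) = b) \<and> (\<forall>i\<in>I. (\<Sum>t\<in>T. w i t) \<le> B + 4 * \<delta>)"
proof -
  obtain x' where x': "feasible b B x'" and "fractional x' = {}"
    using exists_integral_feasible[OF assms] by blast
  define T where "T = {t\<in>ground. x' t = 1}"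
  have x'_T: "x' t = of_bool (t \<in> T)" for t
  proof (cases "t \<in> ground")
    case True
    then have "x' t = 0 \<or> x' t = 1"
      using feasible_integral_off_fractional[OF x'] \<open>fractional x' = {}\<close> by blast
    then show ?thesis using True by (auto simp: T_def)
  next
    case False
    then show ?thesis using x' by (simp add: T_def feasible_def)
  qed
  have "card (T \<inter> U k) = b" if "k \<in> K" for k
  proof -
    have "real b = (\<Sum>t\<in>U k. x' t)" using x' that by (simp add: feasible_def)
    also have "\<dots> = real (card (U k \<inter> T))" using finite_blocks[OF that] by (simp add: x'_T)
    finally show ?thesis by (simp add: Int_commute)
  qed
  moreover have "T \<subseteq> ground" by (simp add: T_def)
  moreover have "(\<Sum>t\<in>T. w i t) \<le> B + 4 * \<delta>" if "i \<in> I" for i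
  proof -
    have "{t\<in>ground. x' t \<noteq> 0} = T" using \<open>T \<subseteq> ground\<close> by (auto simp: x'_T)
    moreover have "(\<Sum>t\<in>ground. w i t * x' t) = (\<Sum>t\<in>T. w i t)"
      using finite_ground \<open>T \<subseteq> ground\<close> by (intro sum.mono_neutral_cong_right) (auto simp: x'_T)
    moreover have "(\<Sum>t\<in>ground. w i t * x' t) \<le> B \<or> (\<Sum>t\<in>{t\<in>ground. x' t \<noteq> 0}. w i t) \<le> B + 4 * \<delta>"
      using x' that unfolding feasible_def by blast
    ultimately show ?thesis using delta_pos by auto
  qed
  ultimately show ?thesis by blast
qed

end

lemma exists_transversal_keeping_most:
  fixes C :: "'i \<Rightarrow> 'a multiset" and U :: "'k \<Rightarrow> 'a set"
  assumes "finite K" "finite I" "disjoint_family_on U K"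
    and U_card: "\<And>k. k \<in> K \<Longrightarrow> finite (U k) \<and> card (U k) = a" and "b \<le> a"
    and C_pos: "\<And>i. i \<in> I \<Longrightarrow> 0 < size (C i)"
    and spread: "\<And>t. (\<Sum>i\<in>I. real (count (C i) t) / real (size (C i))) \<le> \<delta>" and "0 < \<delta>"
    and small: "real b / real a + 4 * \<delta> \<le> \<eta>"
  shows "\<exists>T \<subseteq> (\<Union>k\<in>K. U k). (\<forall>k\<in>K. card (T \<inter> U k) = b) \<and>
           (\<forall>i\<in>I. (1 - \<eta>) * size (C i) \<le> size (mset_remove_set (C i) T))"
proof -
  define w where "w i t = real (count (C i) t) / real (size (C i))" for i t
  interpret weighted_blocks K U I w \<delta>
    using assms by unfold_locales (auto simp: w_def)
  define x0 where "x0 t = (if t \<in> ground then real b / real a else 0)" for t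
  have feas: "feasible b (real b / real a) x0"
    unfolding feasible_def
  proof (intro conjI allI ballI impI disjI1)
    fix t
    show "t \<notin> ground \<Longrightarrow> x0 t = 0" "0 \<le> x0 t" by (simp_all add: x0_def)
    show "x0 t \<le> 1" using \<open>b \<le> a\<close> by (cases "a = 0") (auto simp: x0_def divide_le_eq_1)
  next
    fix k assume "k \<in> K"
    then have "(\<Sum>t\<in>U k. x0 t) = (\<Sum>t\<in>U k. real b / real a)"
      using block_subset_ground by (intro sum.cong) (auto simp: x0_def)
    also have "\<dots> = real b" using U_card[OF \<open>k \<in> K\<close>] \<open>b \<le> a\<close> by (cases "a = 0") auto
    finally show "(\<Sum>t\<in>U k. x0 t) = real b" .
  next
    fix i assume "i \<in> I"
    have "real (\<Sum>t\<in>ground. count (C i) t) \<le> real (size (C i))"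
      using size_mset_remove_set[OF finite_ground, of "C i"] by linarith
    then have "(\<Sum>t\<in>ground. w i t) \<le> 1"
      using C_pos[OF \<open>i \<in> I\<close>] by (simp add: w_def sum_divide_distrib[symmetric])
    moreover have "(\<Sum>t\<in>ground. w i t * x0 t) = (\<Sum>t\<in>ground. w i t) * (real b / real a)"
      unfolding sum_distrib_right by (intro sum.cong) (auto simp: x0_def)
    ultimately show "(\<Sum>t\<in>ground. w i t * x0 t) \<le> real b / real a"
      using mult_right_mono[of _ 1 "real b / real a"] by simp
  qed
  obtain T where "T \<subseteq> ground" and T_blocks: "\<forall>k\<in>K. card (T \<inter> U k) = b"
    and T_light: "\<forall>i\<in>I. (\<Sum>t\<in>T. w i t) \<le> real b / real a + 4 * \<delta>"
    using exists_rounding[OF feas] by blast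
  have "(1 - \<eta>) * size (C i) \<le> size (mset_remove_set (C i) T)" if "i \<in> I" for i
  proof -
    have "finite T" using \<open>T \<subseteq> ground\<close> finite_ground by (rule finite_subset)
    have "(\<Sum>t\<in>T. w i t) \<le> \<eta>" using T_light that small by fastforce
    then have "real (\<Sum>t\<in>T. count (C i) t) / real (size (C i)) \<le> \<eta>"
      by (simp add: w_def sum_divide_distrib)
    then have "real (\<Sum>t\<in>T. count (C i) t) \<le> \<eta> * real (size (C i))"
      using C_pos[OF that] by (simp add: divide_le_eq)
    moreover have "real (size (mset_remove_set (C i) T)) + real (\<Sum>t\<in>T. count (C i) t) = real (size (C i))"
      using size_mset_remove_set[OF \<open>finite T\<close>, of "C i"] by (metis of_nat_add)
    ultimately show ?thesis by (simp add: algebra_simps)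
  qed
  with \<open>T \<subseteq> ground\<close> T_blocks show ?thesis unfolding ground_def by blast
qed

lemma sum_relative_count_le:
  fixes C :: "'i \<Rightarrow> 'a multiset" and r s :: real
  assumes "0 < s" and "\<And>i. i \<in> I \<Longrightarrow> s \<le> real (size (C i))"
    and "real (\<Sum>i\<in>I. count (C i) t) \<le> r"
  shows "(\<Sum>i\<in>I. real (count (C i) t) / real (size (C i))) \<le> r / s"
proof -
  have "(\<Sum>i\<in>I. real (count (C i) t) / real (size (C i))) \<le> (\<Sum>i\<in>I. real (count (C i) t) / s)"
  proof (rule sum_mono)
    fix i assume "i \<in> I"
    then have "s \<le> real (size (C i))" by (rule assms(2))
    with \<open>0 < s\<close> show "real (count (C i) t) / real (size (C i)) \<le> real (count (C i) t) / s"
      by (intro divide_left_mono) auto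
  qed
  also have "\<dots> \<le> r / s"
    using assms by (simp add: sum_divide_distrib[symmetric] divide_right_mono)
  finally show ?thesis .
qed

lemma exists_transversal_of_small_multiplicity:
  fixes C :: "'i \<Rightarrow> 'a multiset" and U :: "'k \<Rightarrow> 'a set" and \<mu> \<nu> :: real
  assumes "finite K" "finite I" "disjoint_family_on U K"
    and "\<And>k. k \<in> K \<Longrightarrow> finite (U k) \<and> card (U k) = a" and "b \<le> a"
    and size_ge: "\<And>i. i \<in> I \<Longrightarrow> \<nu> * real n \<le> real (size (C i))" and "0 < \<nu> * real n"
    and mult_le: "\<And>t. real (\<Sum>i\<in>I. count (C i) t) \<le> \<mu> * real n" and "0 < \<mu>"
    and "real b / real a + 4 * (\<mu> / \<nu>) \<le> \<eta>"
  shows "\<exists>T \<subseteq> (\<Union>k\<in>K. U k). (\<forall>k\<in>K. card (T \<inter> U k) = b) \<and>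
           (\<forall>i\<in>I. (1 - \<eta>) * size (C i) \<le> size (mset_remove_set (C i) T))"
proof (rule exists_transversal_keeping_most)
  show "0 < size (C i)" if "i \<in> I" for i
    using size_ge[OF that] \<open>0 < \<nu> * real n\<close> by linarith
  show "(\<Sum>i\<in>I. real (count (C i) t) / real (size (C i))) \<le> \<mu> / \<nu>" for t
  proof -
    have "n \<noteq> 0" using \<open>0 < \<nu> * real n\<close> by (cases n) auto
    then show ?thesis using sum_relative_count_le[OF \<open>0 < \<nu> * real n\<close> size_ge mult_le] by simp
  qed
  show "0 < \<mu> / \<nu>" using assms by (simp add: zero_less_mult_iff)
qed (use assms in auto)

lemma ratio_le_half_if_ceiling_le:
  fixes \<eta> :: real
  assumes "0 < \<eta>" "\<eta> \<le> 1" and "nat \<lceil>2 * real b / \<eta>\<rceil> \<le> a"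
  shows "real b / real a \<le> \<eta> / 2 \<and> b \<le> a"
proof
  have "2 * real b \<le> \<eta> * real a"
    using assms by (simp add: nat_le_iff ceiling_le_iff divide_le_eq mult.commute)
  moreover have "\<eta> * real a \<le> real a" using assms by (simp add: mult_left_le_one_le)
  ultimately show "b \<le> a" by linarith
  show "real b / real a \<le> \<eta> / 2"
    using \<open>2 * real b \<le> \<eta> * real a\<close> assms by (cases "a = 0") (simp_all add: divide_le_eq)
qed

theorem mainTheorem5:
  fixes \<eta> :: real and b :: nat
  assumes "0 < \<eta>" and "\<eta> \<le> 1"
  shows "\<exists>a0::nat. \<forall>a::nat\<ge>a0. \<exists>\<nu>0::real>0. \<forall>\<nu>::real. 0 < \<nu> \<and> \<nu> \<le> \<nu>0 \<longrightarrow>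
    (\<exists>\<mu>0::real>0. \<forall>\<mu>::real. 0 < \<mu> \<and> \<mu> \<le> \<mu>0 \<longrightarrow>
      (\<exists>n0::nat. \<forall>n::nat\<ge>n0.
        \<forall>(m::nat) (C::nat \<Rightarrow> nat multiset).
          (\<forall>i\<in>{1..m}. \<nu> * real n \<le> real (size (C i)) \<and> size (C i) \<le> n) \<longrightarrow>
          (\<forall>t::nat. real (\<Sum>i\<in>{1..m}. count (C i) t) \<le> \<mu> * real n) \<longrightarrow>
          (\<forall>(l::nat) (U::nat \<Rightarrow> nat set).
            (\<forall>k\<in>{1..l}. \<forall>k'\<in>{1..l}. k \<noteq> k' \<longrightarrow> U k \<inter> U k' = {}) \<longrightarrow>
            (\<forall>k\<in>{1..l}. finite (U k) \<and> card (U k) = a) \<longrightarrow>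
            (\<exists>T. T \<subseteq> (\<Union>k\<in>{1..l}. U k) \<and>
               (\<forall>k\<in>{1..l}. b \<le> card (T \<inter> U k)) \<and>
               (\<forall>i\<in>{1..m}. real (size (mset_remove_set (C i) T))
                                 \<ge> (1 - \<eta>) * real (size (C i)))))))"
proof -
  define a0 where "a0 = nat \<lceil>2 * real b / \<eta>\<rceil>"
  have a_large: "real b / real a \<le> \<eta> / 2 \<and> b \<le> a" if "a0 \<le> a" for a
    using ratio_le_half_if_ceiling_le[OF assms] that by (simp add: a0_def)
  show ?thesis
    apply (rule exI[of _ a0], intro allI impI)
    apply (rule exI[of _ "1::real"], intro conjI zero_less_one allI impI)
    subgoal for a \<nu>
      apply (rule exI[of _ "\<eta> * \<nu> / 8"], intro conjI allI impI)
      subgoal using assms by simp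
      apply (rule exI[of _ "1::nat"], intro allI impI)
      subgoal premises prems for \<mu> n m C l U
      proof -
        have "4 * (\<mu> / \<nu>) \<le> \<eta> / 2" using prems(2,3) by (simp add: field_simps)
        then have "real b / real a + 4 * (\<mu> / \<nu>) \<le> \<eta>" using a_large[OF prems(1)] by linarith
        moreover have "disjoint_family_on U {1..l}" using prems(7) by (simp add: disjoint_family_on_def)
        ultimately have "\<exists>T \<subseteq> (\<Union>k\<in>{1..l}. U k). (\<forall>k\<in>{1..l}. card (T \<inter> U k) = b) \<and>
            (\<forall>i\<in>{1..m}. (1 - \<eta>) * size (C i) \<le> size (mset_remove_set (C i) T))"
          using a_large[OF prems(1)] prems(2-8)
          by (intro exists_transversal_of_small_multiplicity[where \<mu> = \<mu> and \<nu> = \<nu> and n = n]) auto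
        then show ?thesis by auto
      qed
      done
    done
qed

end
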